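(* Let $r\ge 4$, $H\in(0,1)$, $\tau>0$, and let $X=X^*_{\tau(1-H)}$. Then $X$ is $r$-robust, and for every $\eta\in[0,H]$: if $T=\tau(1+\eta)$ then $T/\ell(X,T)\le\min\{c_r(1+\eta)/(1-H),\,r\}$, and if $T=\tau(1-\eta)$ then $T/\ell(X,T)\le\min\{c_r(1-\eta)/(1-H),\,r\}$. In particular $T/\ell(X,T)\le \min\{c_r(1+H)/(1-H),\,r\}$ for every $T\in[\tau(1-H),\tau(1+H)]$.
   Context: A schedule is an increasing sequence $X=(x_i)_{i\ge1}$ of positive reals (contract lengths), with completion times $S_i=\sum_{j=1}^i x_j$. For $T>0$, $\ell(X,T)=\max\{x_i: S_i\le T\}$ ($0$ if none). The robustness of $X$ is $\sup_{i\ge2}S_i/x_{i-1}$; $X$ is $r$-robust if this is at most $r$. For $r\ge4$ let $c_r=\frac{r-\sqrt{r^2-4r}}{2}$ and $b_r=\frac{r+\sqrt{r^2-4r}}{2}$. For $\sigma>0$, $X^*_\sigma$ denotes the schedule $(\gamma b_r^i)_{i\ge1}$ where $\gamma>0$ is chosen so that $\sum_{i=1}^m\gamma b_r^i=\sigma$ for some integer $m\ge1$. The prediction is $\tau$, the interruption is $T$, and the error $\eta$ is defined by $T=\tau(1+\eta)$ if $T\ge\tau$ and $T=\tau(1-\eta)$ if $T\le \tau$; it is assumed that $\eta\le H$ with $H$ known to the schedule. *)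

theory Defs
  imports Complex_Main
begin

text \<open>A schedule is a sequence x indexed by positive integers i = 1, 2, ...
  (the value x 0 is irrelevant). Completion times S_i = x_1 + ... + x_i.\<close>

definition is_schedule :: "(nat \<Rightarrow> real) \<Rightarrow> bool" where
  "is_schedule x \<longleftrightarrow> (\<forall>i\<ge>1. 0 < x i \<and> x i < x (Suc i))"

definition compl :: "(nat \<Rightarrow> real) \<Rightarrow> nat \<Rightarrow> real" where
  "compl x i = (\<Sum>j=1..i. x j)"

definition ell :: "(nat \<Rightarrow> real) \<Rightarrow> real \<Rightarrow> real" where
  "ell x T = (if \<exists>i\<ge>1. compl x i \<le> T
              then Max {x i | i. 1 \<le> i \<and> compl x i \<le> T} else 0)"

definition robust :: "real \<Rightarrow> (nat \<Rightarrow> real) \<Rightarrow> bool" where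
  "robust r x \<longleftrightarrow> (\<forall>i\<ge>2. compl x i / x (i - 1) \<le> r)"

definition c_r :: "real \<Rightarrow> real" where
  "c_r r = (r - sqrt (r^2 - 4*r)) / 2"

definition b_r :: "real \<Rightarrow> real" where
  "b_r r = (r + sqrt (r^2 - 4*r)) / 2"

definition is_Xstar :: "real \<Rightarrow> real \<Rightarrow> (nat \<Rightarrow> real) \<Rightarrow> bool" where
  "is_Xstar r \<sigma> x \<longleftrightarrow> (\<exists>\<gamma>>0. \<exists>m\<ge>1. x = (\<lambda>i. \<gamma> * b_r r ^ i) \<and>
                              (\<Sum>i=1..m. \<gamma> * b_r r ^ i) = \<sigma>)"

end

theory Submission
  imports Defs
begin

text \<open>With \<open>b = b_r r\<close> one has \<open>r = b\<^sup>2/(b-1)\<close> and \<open>c_r r = b/(b-1)\<close>.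
  For the geometric schedule \<open>x\<^sub>i = \<gamma> b\<^sup>i\<close> the completion time \<open>S\<^sub>i\<close> is below
  \<open>b/(b-1) \<cdot> x\<^sub>i\<close>; this gives \<open>S\<^sub>i \<le> r x\<^sub>i\<^sub>-\<^sub>1\<close> (robustness) and \<open>\<sigma> = S\<^sub>m \<le> c_r r \<cdot> x\<^sub>m\<close>.
  An interruption \<open>T \<ge> \<sigma>\<close> falls after \<open>S\<^sub>m\<close>, so \<open>\<ell>(X,T) \<ge> x\<^sub>m \<ge> \<sigma>/c_r r\<close>; and if \<open>x\<^sub>k\<close> is
  the last completed contract then \<open>T < S\<^sub>k\<^sub>+\<^sub>1 \<le> r x\<^sub>k\<close>.\<close>

lemma sqrt_discriminant:
  assumes "4 \<le> r"
  shows "0 \<le> sqrt (r\<^sup>2 - 4 * r)" and "(sqrt (r\<^sup>2 - 4 * r))\<^sup>2 = r\<^sup>2 - 4 * r"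
proof -
  have "4 * r \<le> r\<^sup>2"
    using assms mult_right_mono[of 4 r r] by (simp add: power2_eq_square)
  then show "0 \<le> sqrt (r\<^sup>2 - 4 * r)" and "(sqrt (r\<^sup>2 - 4 * r))\<^sup>2 = r\<^sup>2 - 4 * r"
    by simp_all
qed

lemma b_r_ge_2:
  assumes "4 \<le> r"
  shows "2 \<le> b_r r"
proof -
  have "4 \<le> r + sqrt (r\<^sup>2 - 4 * r)" using sqrt_discriminant(1)[OF assms] assms by linarith
  then show ?thesis unfolding b_r_def by simp
qed

lemma b_r_square: "4 \<le> r \<Longrightarrow> b_r r ^ 2 = r * (b_r r - 1)"
  unfolding b_r_def using sqrt_discriminant(2)[of r]
  by (simp add: power2_eq_square field_simps)

lemma r_eq_b_r: "4 \<le> r \<Longrightarrow> r = b_r r ^ 2 / (b_r r - 1)"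
  using b_r_square[of r] b_r_ge_2[of r] by (simp add: field_simps)

lemma c_r_eq_b_r:
  assumes "4 \<le> r"
  shows "c_r r = b_r r / (b_r r - 1)"
proof -
  have "c_r r = r - b_r r" unfolding b_r_def c_r_def by (simp add: field_simps)
  also have "\<dots> = b_r r / (b_r r - 1)"
    using b_r_square[OF assms] b_r_ge_2[OF assms] by (simp add: field_simps power2_eq_square)
  finally show ?thesis .
qed

lemma compl_geometric:
  "(b - 1) * compl (\<lambda>i. \<gamma> * b ^ i) n = \<gamma> * (b ^ Suc n - b)"
  by (induction n) (simp_all add: compl_def algebra_simps)

lemma compl_geometric_le:
  fixes b \<gamma> :: real
  assumes "0 < \<gamma>" and "1 < b"
  shows "compl (\<lambda>i. \<gamma> * b ^ i) n \<le> b / (b - 1) * (\<gamma> * b ^ n)"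
proof -
  have "0 < \<gamma> * b" using assms by simp
  then have "(b - 1) * compl (\<lambda>i. \<gamma> * b ^ i) n \<le> b * (\<gamma> * b ^ n)"
    using compl_geometric[of b \<gamma> n] by (simp add: algebra_simps)
  then show ?thesis
    using assms by (simp add: field_simps mult.commute)
qed

lemma is_schedule_geometric:
  fixes b \<gamma> :: real
  assumes "0 < \<gamma>" and "1 < b"
  shows "is_schedule (\<lambda>i. \<gamma> * b ^ i)"
  unfolding is_schedule_def using assms by simp

lemma robust_geometric:
  fixes b \<gamma> :: real
  assumes "0 < \<gamma>" and "1 < b"
  shows "robust (b\<^sup>2 / (b - 1)) (\<lambda>i. \<gamma> * b ^ i)"
  unfolding robust_def
proof (intro allI impI)
  fix i :: nat
  assume "2 \<le> i"
  then obtain j where i: "i = Suc j" by (cases i) auto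
  have "compl (\<lambda>i. \<gamma> * b ^ i) i \<le> b / (b - 1) * (\<gamma> * b ^ i)"
    using compl_geometric_le[OF assms] .
  also have "\<dots> = b\<^sup>2 / (b - 1) * (\<gamma> * b ^ j)"
    unfolding i by (simp add: power2_eq_square)
  finally show "compl (\<lambda>i. \<gamma> * b ^ i) i / (\<gamma> * b ^ (i - 1)) \<le> b\<^sup>2 / (b - 1)"
    using assms by (simp add: i divide_le_eq)
qed

lemma schedule_mono:
  assumes "is_schedule x" and "1 \<le> i" and "i \<le> j"
  shows "x i \<le> x j"
  using assms(3)
proof (induction j rule: dec_induct)
  case (step n)
  then have "x n < x (Suc n)"
    using assms(1,2) unfolding is_schedule_def by simp
  with step.IH show ?case by simp
qed simp

lemma finite_completed:
  assumes "is_schedule x"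
  shows "finite {i. 1 \<le> i \<and> compl x i \<le> T}"
proof (rule finite_subset)
  have x1: "0 < x 1" using assms unfolding is_schedule_def by simp
  show "{i. 1 \<le> i \<and> compl x i \<le> T} \<subseteq> {..nat \<lceil>T / x 1\<rceil>}"
  proof safe
    fix i assume "1 \<le> i" "compl x i \<le> T"
    have "real i * x 1 = (\<Sum>j=1..i. x 1)" by simp
    also have "\<dots> \<le> compl x i"
      unfolding compl_def using assms by (intro sum_mono schedule_mono) auto
    finally have "real i \<le> T / x 1"
      using \<open>compl x i \<le> T\<close> x1 by (simp add: le_divide_eq)
    then show "i \<le> nat \<lceil>T / x 1\<rceil>" by linarith
  qed
qed simp

lemma ell_last_completed:
  assumes "is_schedule x" and "1 \<le> i" and "compl x i \<le> T"
  obtains k where "i \<le> k" and "T < compl x (Suc k)" and "ell x T = x k"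
proof
  define K where "K = {i. 1 \<le> i \<and> compl x i \<le> T}"
  have fin: "finite K" and iK: "i \<in> K"
    using finite_completed[OF assms(1)] assms(2,3) unfolding K_def by auto
  show "i \<le> Max K" using fin iK by simp
  have "Suc (Max K) \<notin> K" using Max_ge[OF fin, of "Suc (Max K)"] by auto
  then show "T < compl x (Suc (Max K))" unfolding K_def by auto
  have "Max (x ` K) = x (Max K)"
  proof (rule Max_eqI)
    show "y \<le> x (Max K)" if y: "y \<in> x ` K" for y
    proof -
      obtain j where j: "j \<in> K" "y = x j" using y by blast
      then have "1 \<le> j" unfolding K_def by simp
      then show ?thesis using schedule_mono[OF assms(1) _ Max_ge[OF fin j(1)]] j(2) by simp
    qed
    show "x (Max K) \<in> x ` K" using fin iK by (intro imageI Max_in) auto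
  qed (use fin in simp)
  moreover have "{x i | i. 1 \<le> i \<and> compl x i \<le> T} = x ` K" unfolding K_def by auto
  moreover have "\<exists>i\<ge>1. compl x i \<le> T" using assms(2,3) by blast
  ultimately show "ell x T = x (Max K)" unfolding ell_def by simp
qed

lemma ell_ge:
  assumes "is_schedule x" and "1 \<le> i" and "compl x i \<le> T"
  shows "x i \<le> ell x T"
proof -
  obtain k where "i \<le> k" and "ell x T = x k"
    using ell_last_completed[OF assms] .
  then show ?thesis using schedule_mono[OF assms(1,2)] by simp
qed

lemma ell_robust_bound:
  assumes "robust r x" and "is_schedule x" and "1 \<le> i" and "compl x i \<le> T"
  shows "T / ell x T \<le> r"
proof -
  obtain k where k: "i \<le> k" "T < compl x (Suc k)" "ell x T = x k"
    using ell_last_completed[OF assms(2-4)] .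
  have "0 < x k" using assms(2,3) k(1) unfolding is_schedule_def by simp
  moreover have "2 \<le> Suc k" using assms(3) k(1) by simp
  then have "compl x (Suc k) / x k \<le> r"
    using assms(1) unfolding robust_def by (metis diff_Suc_1)
  ultimately show ?thesis
    using k(2,3) by (simp add: divide_le_eq)
qed

lemma Xstar_competitive:
  assumes r: "4 \<le> r" and X: "is_Xstar r \<sigma> x" and T: "\<sigma> \<le> T"
  shows "robust r x" and "T / ell x T \<le> min (c_r r * T / \<sigma>) r"
proof -
  obtain \<gamma> m where \<gamma>: "0 < \<gamma>" and m: "1 \<le> m" and x: "x = (\<lambda>i. \<gamma> * b_r r ^ i)"
    and \<sigma>: "compl x m = \<sigma>"
    using X unfolding is_Xstar_def compl_def by auto
  have b: "1 < b_r r" using b_r_ge_2[OF r] by simp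
  have sched: "is_schedule x" unfolding x using is_schedule_geometric[OF \<gamma> b] .
  show rob: "robust r x"
    unfolding x using robust_geometric[OF \<gamma> b] r_eq_b_r[OF r] by simp
  have xm: "0 < x m" using \<gamma> b x by simp
  have \<sigma>_le: "\<sigma> \<le> c_r r * x m"
    unfolding \<sigma>[symmetric] x c_r_eq_b_r[OF r] using compl_geometric_le[OF \<gamma> b] .
  have \<sigma>_pos: "0 < \<sigma>"
    unfolding \<sigma>[symmetric] compl_def using m \<gamma> b x by (intro sum_pos) auto
  have "x m \<le> ell x T" using ell_ge[OF sched m] \<sigma> T by simp
  then have "T / ell x T \<le> T / x m"
    using T \<sigma>_pos xm by (intro divide_left_mono) auto
  also have "\<dots> \<le> c_r r * T / \<sigma>"
  proof -
    have "T * \<sigma> \<le> T * (c_r r * x m)" using \<sigma>_le \<sigma>_pos T by (intro mult_left_mono) auto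
    then show ?thesis using \<sigma>_pos xm by (simp add: field_simps)
  qed
  finally show "T / ell x T \<le> min (c_r r * T / \<sigma>) r"
    using ell_robust_bound[OF rob sched m] \<sigma> T by simp
qed

theorem lemma2:
  fixes r H \<tau> :: real and x :: "nat \<Rightarrow> real"
  assumes "r \<ge> 4" and "0 < H" and "H < 1" and "\<tau> > 0"
    and "is_Xstar r (\<tau> * (1 - H)) x"
  shows "robust r x
    \<and> (\<forall>\<eta>. 0 \<le> \<eta> \<and> \<eta> \<le> H \<longrightarrow>
          (\<tau> * (1 + \<eta>)) / ell x (\<tau> * (1 + \<eta>)) \<le> min (c_r r * (1 + \<eta>) / (1 - H)) r
        \<and> (\<tau> * (1 - \<eta>)) / ell x (\<tau> * (1 - \<eta>)) \<le> min (c_r r * (1 - \<eta>) / (1 - H)) r)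
    \<and> (\<forall>T. \<tau> * (1 - H) \<le> T \<and> T \<le> \<tau> * (1 + H) \<longrightarrow>
          T / ell x T \<le> min (c_r r * (1 + H) / (1 - H)) r)"
proof -
  note competitive = Xstar_competitive[OF assms(1,5)]
  have scale: "c_r r * (\<tau> * a) / (\<tau> * (1 - H)) = c_r r * a / (1 - H)" for a
    using assms(3,4) by simp
  have scaled_bound: "(\<tau> * a) / ell x (\<tau> * a) \<le> min (c_r r * a / (1 - H)) r"
    if "1 - H \<le> a" for a
    using competitive(2)[of "\<tau> * a"] that assms(4) scale[of a] by simp
  have c_nonneg: "0 \<le> c_r r" using c_r_eq_b_r[OF assms(1)] b_r_ge_2[OF assms(1)] by simp
  have "T / ell x T \<le> min (c_r r * (1 + H) / (1 - H)) r"
    if "\<tau> * (1 - H) \<le> T" "T \<le> \<tau> * (1 + H)" for T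
  proof -
    have "c_r r * T / (\<tau> * (1 - H)) \<le> c_r r * (\<tau> * (1 + H)) / (\<tau> * (1 - H))"
      using that(2) c_nonneg assms(3,4) by (intro divide_right_mono mult_left_mono) auto
    then show ?thesis
      using competitive(2)[OF that(1)] scale[of "1 + H"] by linarith
  qed
  moreover have "1 - H \<le> 1 + \<eta>" "1 - H \<le> 1 - \<eta>" if "0 \<le> \<eta>" "\<eta> \<le> H" for \<eta>
    using that by simp_all
  ultimately show ?thesis
    using competitive(1) scaled_bound by blast
qed

end
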